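(* Let $A,B$ be invertible square complex matrices such that $ABA^{-1}B^{-1}-I$ has rank at most $1$. Then there is a basis in which $A$ and $B$ are both upper triangular. *)

theory Defs
  imports "Jordan_Normal_Form.DL_Rank"
begin

end

theory Submission
  imports Defs "Jordan_Normal_Form.Schur_Decomposition" "Jordan_Normal_Form.Spectral_Radius"
begin

text \<open>
  Write \<open>A * B - B * A = u * w\<^sup>T\<close> and let \<open>l\<close> be an eigenvalue of \<open>A\<close>. If \<open>B\<close> maps the
  eigenspace \<open>ker (A - l)\<close> into itself, it has an eigenvector there, which is a common eigenvector
  of \<open>A\<close> and \<open>B\<close>. Otherwise some \<open>x\<close> with \<open>A x = l x\<close> has
  \<open>(A - l) (B x) = (A * B - B * A) x = (w \<bullet> x) u \<noteq> 0\<close>, so \<open>u\<close> lies in the range of \<open>A - l\<close> and is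
  orthogonal to \<open>ker (A\<^sup>T - l)\<close>; then \<open>A\<^sup>T * B\<^sup>T - B\<^sup>T * A\<^sup>T = - w u\<^sup>T\<close> vanishes there, so \<open>B\<^sup>T\<close>
  preserves \<open>ker (A\<^sup>T - l)\<close> and \<open>A\<^sup>T, B\<^sup>T\<close> have a common eigenvector. A common eigenvector
  lets us put both matrices in block upper triangular form with a \<open>1 \<times> 1\<close> upper left block; the
  lower right blocks again have a commutator of rank at most one, so induction applies, and the
  transposed case is brought back by conjugating with the matrix reversing the basis. For
  invertible \<open>A, B\<close> the hypothesis applies because
  \<open>A * B - B * A = (A * B * A\<^sup>-\<^sup>1 * B\<^sup>-\<^sup>1 - 1) * (B * A)\<close>.
\<close>

lemma mult_square_carrier_mat:
  "A \<in> carrier_mat n n \<Longrightarrow> B \<in> carrier_mat n n \<Longrightarrow> A * B \<in> carrier_mat n n"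
  by auto

lemma assoc_mult_square_mat:
  "A \<in> carrier_mat n n \<Longrightarrow> B \<in> carrier_mat n n \<Longrightarrow> C \<in> carrier_mat n n \<Longrightarrow>
   A * B * C = A * (B * C)"
  by auto

lemma mult_mat_vec_zero_vec [simp]: "A \<in> carrier_mat nr nc \<Longrightarrow> A *\<^sub>v 0\<^sub>v nc = 0\<^sub>v nr"
  by (intro eq_vecI) auto

lemma vec_minus_eq_zero_iff:
  fixes v w :: "'a::ab_group_add vec"
  assumes "v \<in> carrier_vec n" and "w \<in> carrier_vec n"
  shows "v - w = 0\<^sub>v n \<longleftrightarrow> v = w"
proof
  assume difference: "v - w = 0\<^sub>v n"
  show "v = w"
  proof (rule eq_vecI)
    fix i assume "i < dim_vec w"
    then have i: "i < n" using assms by simp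
    have "(v - w) $ i = 0" using difference i by simp
    then show "v $ i = w $ i" using i assms by simp
  qed (use assms in simp)
qed (use assms in simp)

section \<open>Matrices of rank at most one\<close>

lemma lin_indpt_pair:
  fixes d w :: "'a::field vec"
  assumes d: "d \<in> carrier_vec n" and w: "w \<in> carrier_vec n"
    and d0: "d \<noteq> 0\<^sub>v n" and not_multiple: "\<not> (\<exists>c. w = c \<cdot>\<^sub>v d)"
  shows "module.lin_indpt class_ring (module_vec TYPE('a) n) {d, w}"
proof
  interpret vec_space "TYPE('a)" n .
  assume "lin_dep {d, w}"
  have "d \<noteq> w" using not_multiple by (metis smult_carrier_vec one_smult_vec d)
  from finite_lin_dep[of "{d, w}"] \<open>lin_dep {d, w}\<close> d w obtain a v where
    lc: "lincomb a {d, w} = 0\<^sub>v n" and v: "v \<in> {d, w}" "a v \<noteq> 0" by auto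
  have comp: "a d * d $ i + a w * w $ i = 0" if "i < n" for i
  proof -
    have "lincomb a {d, w} $ i = 0" using lc that by simp
    thus ?thesis using lincomb_index[OF that, of "{d, w}" a] d w \<open>d \<noteq> w\<close> by simp
  qed
  show False
  proof (cases "a w = 0")
    case True
    with v have "a d \<noteq> 0" by auto
    with comp True have "d = 0\<^sub>v n" using d by (intro eq_vecI) auto
    with d0 show False by simp
  next
    case False
    have "w = (- a d / a w) \<cdot>\<^sub>v d"
    proof (rule eq_vecI)
      fix i assume "i < dim_vec ((- a d / a w) \<cdot>\<^sub>v d)"
      hence i: "i < n" using d by auto
      have "a w * w $ i = - (a d * d $ i)" using comp[OF i] by (simp add: add_eq_0_iff)
      thus "w $ i = ((- a d / a w) \<cdot>\<^sub>v d) $ i" using i d False by (simp add: field_simps)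
    qed (use d w in auto)
    with not_multiple show False by blast
  qed
qed

lemma rank_le_1_imp_outer_product:
  fixes D :: "'a::field mat"
  assumes D: "D \<in> carrier_mat n n" and rank: "vec_space.rank n D \<le> 1"
  shows "\<exists>U V. U \<in> carrier_mat n 1 \<and> V \<in> carrier_mat 1 n \<and> D = U * V"
proof -
  have "\<exists>u v. \<forall>i<n. \<forall>j<n. D $$ (i, j) = u i * v j"
  proof (cases "\<forall>j<n. col D j = 0\<^sub>v n")
    case True
    have "D $$ (i, j) = 0" if "i < n" "j < n" for i j
      using True[rule_format, OF \<open>j < n\<close>, THEN arg_cong[where f = "\<lambda>v. v $ i"]] D that
      by simp
    then show ?thesis by (intro exI[of _ "\<lambda>_. 0"]) simp
  next
    case False
    then obtain j0 where j0: "j0 < n" and nonzero: "col D j0 \<noteq> 0\<^sub>v n" by auto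
    interpret vec_space "TYPE('a)" n .
    have multiple: "\<exists>c. col D j = c \<cdot>\<^sub>v col D j0" if j: "j < n" for j
    proof (rule ccontr)
      assume not_multiple: "\<not> ?thesis"
      have "{col D j0, col D j} \<subseteq> set (cols D)" using D j j0 by (auto simp: cols_def)
      moreover have "lin_indpt {col D j0, col D j}"
        using lin_indpt_pair[OF _ _ nonzero not_multiple] D j j0 by auto
      ultimately have "card {col D j0, col D j} \<le> rank D" by (rule rank_ge_card_indpt[OF D])
      moreover have "col D j0 \<noteq> col D j" using not_multiple by (metis one_smult_vec)
      ultimately show False using rank by simp
    qed
    define c where "c j = (SOME c. col D j = c \<cdot>\<^sub>v col D j0)" for j
    have "D $$ (i, j) = col D j0 $ i * c j" if "i < n" "j < n" for i j
    proof -
      from someI_ex[OF multiple[OF \<open>j < n\<close>]] have "col D j = c j \<cdot>\<^sub>v col D j0"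
        unfolding c_def .
      hence "col D j $ i = (c j \<cdot>\<^sub>v col D j0) $ i" by simp
      thus ?thesis using D that j0 by (simp add: mult.commute)
    qed
    then show ?thesis by blast
  qed
  then obtain u v where uv: "\<forall>i<n. \<forall>j<n. D $$ (i, j) = u i * v j" by blast
  show ?thesis
    by (rule exI[of _ "mat n 1 (\<lambda>(i, _). u i)"], rule exI[of _ "mat 1 n (\<lambda>(_, j). v j)"])
      (use D uv in \<open>auto intro!: eq_matI simp: scalar_prod_def\<close>)
qed

section \<open>Rank-one commutators\<close>

definition rank_one_commutator :: "nat \<Rightarrow> 'a::comm_ring_1 mat \<Rightarrow> 'a mat \<Rightarrow> bool" where
  "rank_one_commutator n A B \<longleftrightarrow>
     (\<exists>U V. U \<in> carrier_mat n 1 \<and> V \<in> carrier_mat 1 n \<and> A * B - B * A = U * V)"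

lemma outer_mult_mat_vec:
  fixes U V :: "'a::comm_ring_1 mat"
  assumes U: "U \<in> carrier_mat n 1" and V: "V \<in> carrier_mat 1 m" and x: "x \<in> carrier_vec m"
  shows "(U * V) *\<^sub>v x = (row V 0 \<bullet> x) \<cdot>\<^sub>v col U 0"
proof (rule eq_vecI)
  fix i assume "i < dim_vec ((row V 0 \<bullet> x) \<cdot>\<^sub>v col U 0)"
  then have i: "i < n" using U by simp
  have "(U * V) *\<^sub>v x = U *\<^sub>v (V *\<^sub>v x)" using U V x by simp
  also have "(U *\<^sub>v (V *\<^sub>v x)) $ i = U $$ (i, 0) * (row V 0 \<bullet> x)"
    using U V x i by (simp add: scalar_prod_def)
  finally show "((U * V) *\<^sub>v x) $ i = ((row V 0 \<bullet> x) \<cdot>\<^sub>v col U 0) $ i"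
    using U i by (simp add: mult.commute)
qed (use U V in auto)

lemma commutator_mult_mat_vec:
  fixes A B :: "'a::comm_ring_1 mat"
  assumes "A \<in> carrier_mat n n" and "B \<in> carrier_mat n n" and "x \<in> carrier_vec n"
  shows "(A * B - B * A) *\<^sub>v x = A *\<^sub>v (B *\<^sub>v x) - B *\<^sub>v (A *\<^sub>v x)"
  using assms by (simp add: minus_mult_distrib_mat_vec[of _ n n])

lemma transpose_commutator:
  fixes A B :: "'a::comm_ring_1 mat"
  assumes "A \<in> carrier_mat n n" and "B \<in> carrier_mat n n"
  shows "transpose_mat A * transpose_mat B - transpose_mat B * transpose_mat A
    = - transpose_mat (A * B - B * A)"
  using assms by (auto simp: transpose_mult[of _ n n] transpose_minus[of _ n n] intro!: eq_matI)

lemma rank_one_commutator_similar: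
  fixes A B P Q :: "'a::comm_ring_1 mat"
  assumes A: "A \<in> carrier_mat n n" and B: "B \<in> carrier_mat n n"
    and P: "P \<in> carrier_mat n n" and Q: "Q \<in> carrier_mat n n" and PQ: "P * Q = 1\<^sub>m n"
    and comm: "rank_one_commutator n A B"
  shows "rank_one_commutator n (Q * A * P) (Q * B * P)"
proof -
  from comm obtain U V where U: "U \<in> carrier_mat n 1" and V: "V \<in> carrier_mat 1 n"
    and UV: "A * B - B * A = U * V" unfolding rank_one_commutator_def by auto
  have cancel: "P * (Q * X) = X" if "X \<in> carrier_mat n n" for X
    using that P Q PQ by (simp flip: assoc_mult_mat[OF P Q])
  have "Q * A * P * (Q * B * P) - Q * B * P * (Q * A * P) = Q * (A * (B * P)) - Q * (B * (A * P))"
    using A B P Q by (simp add: cancel assoc_mult_square_mat[of _ n] mult_square_carrier_mat)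
  also have "\<dots> = (Q * (A * B) - Q * (B * A)) * P"
    using A B P Q by (subst minus_mult_distrib_mat[OF _ _ P]) (auto simp: assoc_mult_square_mat[of _ n])
  also have "\<dots> = Q * (A * B - B * A) * P"
    using A B by (subst mult_minus_distrib_mat[OF Q]) auto
  also have "\<dots> = Q * (U * V * P)" unfolding UV by (rule assoc_mult_mat[OF Q _ P]) (use U V in auto)
  also have "U * V * P = U * (V * P)" by (rule assoc_mult_mat[OF U V P])
  also have "Q * (U * (V * P)) = (Q * U) * (V * P)"
    by (rule assoc_mult_mat[OF Q U, symmetric]) (use V P in auto)
  finally show ?thesis unfolding rank_one_commutator_def using Q U V P
    by (intro exI[of _ "Q * U"] exI[of _ "V * P"]) auto
qed

lemma rank_one_commutator_transpose:
  fixes A B :: "'a::comm_ring_1 mat"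
  assumes A: "A \<in> carrier_mat n n" and B: "B \<in> carrier_mat n n"
    and comm: "rank_one_commutator n A B"
  shows "rank_one_commutator n (transpose_mat A) (transpose_mat B)"
proof -
  from comm obtain U V where U: "U \<in> carrier_mat n 1" and V: "V \<in> carrier_mat 1 n"
    and UV: "A * B - B * A = U * V" unfolding rank_one_commutator_def by auto
  have "transpose_mat A * transpose_mat B - transpose_mat B * transpose_mat A
      = - transpose_mat (A * B - B * A)"
    by (rule transpose_commutator[OF A B])
  also have "\<dots> = (- transpose_mat V) * transpose_mat U"
    unfolding UV using U V by (simp add: transpose_mult)
  finally show ?thesis unfolding rank_one_commutator_def using U V
    by (intro exI[of _ "- transpose_mat V"] exI[of _ "transpose_mat U"]) auto
qed

lemma rank_one_commutator_if_rank_group_commutator_le_1: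
  fixes A B Ainv Binv :: "'a::field mat"
  assumes A: "A \<in> carrier_mat n n" and B: "B \<in> carrier_mat n n"
    and Ainv: "Ainv \<in> carrier_mat n n" and Binv: "Binv \<in> carrier_mat n n"
    and AinvA: "Ainv * A = 1\<^sub>m n" and BinvB: "Binv * B = 1\<^sub>m n"
    and rank: "vec_space.rank n (A * B * Ainv * Binv - 1\<^sub>m n) \<le> 1"
  shows "rank_one_commutator n A B"
proof -
  define D where "D = A * B * Ainv * Binv - 1\<^sub>m n"
  have D: "D \<in> carrier_mat n n"
    unfolding D_def by (meson A B Ainv Binv mult_carrier_mat minus_carrier_mat one_carrier_mat)
  obtain U V where U: "U \<in> carrier_mat n 1" and V: "V \<in> carrier_mat 1 n" and DUV: "D = U * V"
    using rank_le_1_imp_outer_product[OF D] rank by (auto simp: D_def)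
  have "A * B * Ainv * Binv * (B * A) = A * (B * (Ainv * ((Binv * B) * A)))"
    using A B Ainv Binv by (simp add: assoc_mult_square_mat[of _ n] mult_square_carrier_mat)
  also have "\<dots> = A * B" using A B Ainv by (simp add: AinvA BinvB)
  finally have "D * (B * A) = A * B - B * A"
    unfolding D_def using A B Ainv Binv
    by (subst minus_mult_distrib_mat[where n = n]) (auto simp: mult_square_carrier_mat)
  then have "A * B - B * A = D * (B * A)" ..
  also have "\<dots> = U * (V * (B * A))" unfolding DUV by (rule assoc_mult_mat[OF U V]) (use A B in auto)
  finally show ?thesis unfolding rank_one_commutator_def using U V A B
    by (intro exI[of _ U] exI[of _ "V * (B * A)"]) auto
qed

section \<open>Common eigenvectors\<close>

lemma upper_triangular_mult_vec_index:
  fixes T :: "'a::comm_ring_1 mat"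
  assumes T: "T \<in> carrier_mat n n" "upper_triangular T" and z: "z \<in> carrier_vec n"
    and tail: "\<And>j. k < j \<Longrightarrow> j < n \<Longrightarrow> z $ j = 0" and i: "k \<le> i" "i < n"
  shows "(T *\<^sub>v z) $ i = T $$ (i, i) * z $ i"
proof -
  have "(T *\<^sub>v z) $ i = (\<Sum>j\<in>{0..<n}. T $$ (i, j) * z $ j)"
    using T z i by (simp add: scalar_prod_def)
  also have "\<dots> = T $$ (i, i) * z $ i + (\<Sum>j\<in>{0..<n} - {i}. T $$ (i, j) * z $ j)"
    using i by (subst sum.remove) auto
  also have "(\<Sum>j\<in>{0..<n} - {i}. T $$ (i, j) * z $ j) = 0"
  proof (rule sum.neutral, intro ballI)
    fix j assume j: "j \<in> {0..<n} - {i}"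
    show "T $$ (i, j) * z $ j = 0"
    proof (cases "j < i")
      case True
      with T i show ?thesis by (simp add: upper_triangularD)
    next
      case False
      with j i tail show ?thesis by simp
    qed
  qed
  finally show ?thesis by simp
qed

lemma upper_triangular_invariant_set_has_eigenvector:
  fixes T :: "'a::field mat"
  assumes T: "T \<in> carrier_mat n n" "upper_triangular T"
    and S: "S \<subseteq> carrier_vec n" and invariant: "\<And>z c. z \<in> S \<Longrightarrow> T *\<^sub>v z - c \<cdot>\<^sub>v z \<in> S"
    and z0: "z0 \<in> S" "z0 \<noteq> 0\<^sub>v n"
  shows "\<exists>z\<in>S. z \<noteq> 0\<^sub>v n \<and> (\<exists>\<mu>. T *\<^sub>v z = \<mu> \<cdot>\<^sub>v z)"
proof -
  \<comment> \<open>induction on the support of \<open>z\<close>: subtracting the diagonal entry at its last position shortens it\<close>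
  have "\<exists>z\<in>S. z \<noteq> 0\<^sub>v n \<and> (\<exists>\<mu>. T *\<^sub>v z = \<mu> \<cdot>\<^sub>v z)"
    if "z \<in> S" "z \<noteq> 0\<^sub>v n" "\<And>j. k \<le> j \<Longrightarrow> j < n \<Longrightarrow> z $ j = 0" for k z
    using that
  proof (induction k arbitrary: z)
    case 0
    then have "z = 0\<^sub>v n" using S by (intro eq_vecI) auto
    with \<open>z \<noteq> 0\<^sub>v n\<close> show ?case by simp
  next
    case (Suc k)
    have z: "z \<in> carrier_vec n" using Suc.prems(1) S by auto
    define w where "w = T *\<^sub>v z - T $$ (k, k) \<cdot>\<^sub>v z"
    show ?case
    proof (cases "w = 0\<^sub>v n")
      case True
      have "T *\<^sub>v z = T $$ (k, k) \<cdot>\<^sub>v z"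
      proof (rule eq_vecI)
        fix i assume "i < dim_vec (T $$ (k, k) \<cdot>\<^sub>v z)"
        then have "i < n" using z by simp
        then show "(T *\<^sub>v z) $ i = (T $$ (k, k) \<cdot>\<^sub>v z) $ i"
          using True[THEN arg_cong[where f = "\<lambda>v. v $ i"]] T z by (simp add: w_def)
      qed (use T z in simp)
      with Suc.prems show ?thesis by blast
    next
      case False
      have tail: "z $ j = 0" if "k < j" "j < n" for j using Suc.prems(3) that by simp
      have "w $ i = 0" if "k \<le> i" "i < n" for i
        using upper_triangular_mult_vec_index[OF T z tail that] tail[of i] that T z
        by (cases "i = k") (auto simp: w_def)
      with Suc.IH[of w] invariant[OF Suc.prems(1)] False show ?thesis by (simp add: w_def)
    qed
  qed
  from this[OF z0, of n] show ?thesis by simp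
qed

lemma invariant_set_has_eigenvector:
  fixes B :: "complex mat"
  assumes B: "B \<in> carrier_mat n n"
    and S: "S \<subseteq> carrier_vec n" and invariant: "\<And>y c. y \<in> S \<Longrightarrow> B *\<^sub>v y - c \<cdot>\<^sub>v y \<in> S"
    and y0: "y0 \<in> S" "y0 \<noteq> 0\<^sub>v n"
  shows "\<exists>y\<in>S. y \<noteq> 0\<^sub>v n \<and> (\<exists>\<mu>. B *\<^sub>v y = \<mu> \<cdot>\<^sub>v y)"
proof -
  obtain es where "char_poly B = (\<Prod>a\<leftarrow>es. [:- a, 1:])" using char_poly_factorized[OF B] by blast
  from schur_decomposition_exists[OF B this] obtain T P Q where
    T: "T \<in> carrier_mat n n" "upper_triangular T" and sim: "similar_mat_wit B T P Q"
    unfolding similar_mat_def by blast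
  from similar_mat_witD2[OF B sim] have PQ: "P * Q = 1\<^sub>m n" and QP: "Q * P = 1\<^sub>m n"
    and BPTQ: "B = P * T * Q" and P: "P \<in> carrier_mat n n" and Q: "Q \<in> carrier_mat n n" by auto
  have QPz: "Q *\<^sub>v (P *\<^sub>v z) = z" if "z \<in> carrier_vec n" for z
    using that P Q QP by (simp flip: assoc_mult_mat_vec[OF Q P])
  have PQy: "P *\<^sub>v (Q *\<^sub>v y) = y" if "y \<in> carrier_vec n" for y
    using that P Q PQ by (simp flip: assoc_mult_mat_vec[OF P Q])
  have BP: "B *\<^sub>v (P *\<^sub>v z) = P *\<^sub>v (T *\<^sub>v z)" if z: "z \<in> carrier_vec n" for z
  proof -
    have "B *\<^sub>v (P *\<^sub>v z) = (P * T) *\<^sub>v (Q *\<^sub>v (P *\<^sub>v z))"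
      unfolding BPTQ by (rule assoc_mult_mat_vec) (use P T Q z in auto)
    also have "\<dots> = P *\<^sub>v (T *\<^sub>v z)" using P T z QPz[OF z] by simp
    finally show ?thesis .
  qed
  define S' where "S' = {z \<in> carrier_vec n. P *\<^sub>v z \<in> S}"
  have S'_carrier: "S' \<subseteq> carrier_vec n" by (auto simp: S'_def)
  have S'_invariant: "T *\<^sub>v z - c \<cdot>\<^sub>v z \<in> S'" if "z \<in> S'" for z c
  proof -
    have z: "z \<in> carrier_vec n" using that unfolding S'_def by simp
    have "P *\<^sub>v (T *\<^sub>v z - c \<cdot>\<^sub>v z) = B *\<^sub>v (P *\<^sub>v z) - c \<cdot>\<^sub>v (P *\<^sub>v z)"
      using z P T by (simp add: BP mult_minus_distrib_mat_vec[OF P] mult_mat_vec)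
    with invariant[of "P *\<^sub>v z" c] that T z show ?thesis unfolding S'_def by simp
  qed
  have y0_carrier: "y0 \<in> carrier_vec n" using y0 S by auto
  have "Q *\<^sub>v y0 \<noteq> 0\<^sub>v n" using PQy[OF y0_carrier] y0 P by (metis mult_mat_vec_zero_vec)
  moreover have "Q *\<^sub>v y0 \<in> S'" using y0 y0_carrier Q PQy by (simp add: S'_def)
  ultimately obtain z \<mu> where "z \<in> S'" "z \<noteq> 0\<^sub>v n" "T *\<^sub>v z = \<mu> \<cdot>\<^sub>v z"
    using upper_triangular_invariant_set_has_eigenvector[OF T S'_carrier S'_invariant] by blast
  moreover from this have "P *\<^sub>v z \<noteq> 0\<^sub>v n"
    using QPz[of z] Q by (metis S'_carrier mult_mat_vec_zero_vec subsetD)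
  ultimately show ?thesis using P by (intro bexI[of _ "P *\<^sub>v z"]) (auto simp: S'_def BP mult_mat_vec)
qed

lemma invariant_eigenspace_common_eigenvector:
  fixes A B :: "complex mat"
  assumes A: "A \<in> carrier_mat n n" and B: "B \<in> carrier_mat n n" and "eigenvalue A l"
    and invariant: "\<And>x. x \<in> carrier_vec n \<Longrightarrow> A *\<^sub>v x = l \<cdot>\<^sub>v x \<Longrightarrow> A *\<^sub>v (B *\<^sub>v x) = l \<cdot>\<^sub>v (B *\<^sub>v x)"
  shows "\<exists>y \<mu>. eigenvector A y l \<and> eigenvector B y \<mu>"
proof -
  define E where "E = {x \<in> carrier_vec n. A *\<^sub>v x = l \<cdot>\<^sub>v x}"
  have "B *\<^sub>v x - c \<cdot>\<^sub>v x \<in> E" if "x \<in> E" for x c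
  proof -
    have x: "x \<in> carrier_vec n" and Ax: "A *\<^sub>v x = l \<cdot>\<^sub>v x" using that by (auto simp: E_def)
    have "A *\<^sub>v (B *\<^sub>v x - c \<cdot>\<^sub>v x) = l \<cdot>\<^sub>v (B *\<^sub>v x) - c \<cdot>\<^sub>v (l \<cdot>\<^sub>v x)"
      using A B x by (simp add: mult_minus_distrib_mat_vec[OF A] mult_mat_vec Ax invariant)
    also have "\<dots> = l \<cdot>\<^sub>v (B *\<^sub>v x - c \<cdot>\<^sub>v x)"
      using B x by (intro eq_vecI) (auto simp: algebra_simps)
    finally show ?thesis using B x by (simp add: E_def)
  qed
  moreover obtain x0 where "eigenvector A x0 l" using \<open>eigenvalue A l\<close> by (auto simp: eigenvalue_def)
  then have "x0 \<in> E" "x0 \<noteq> 0\<^sub>v n" using A by (auto simp: E_def eigenvector_def)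
  moreover have "E \<subseteq> carrier_vec n" by (auto simp: E_def)
  ultimately obtain y \<mu> where "y \<in> E" "y \<noteq> 0\<^sub>v n" "B *\<^sub>v y = \<mu> \<cdot>\<^sub>v y"
    using invariant_set_has_eigenvector[OF B, of E x0] by blast
  then show ?thesis using A B by (auto simp: E_def eigenvector_def)
qed

lemma rank_one_commutator_transpose_eigenspace_invariant:
  fixes A B :: "'a::field mat"
  assumes A: "A \<in> carrier_mat n n" and B: "B \<in> carrier_mat n n"
    and comm: "rank_one_commutator n A B"
    and x: "x \<in> carrier_vec n" and Ax: "A *\<^sub>v x = l \<cdot>\<^sub>v x"
    and escapes: "A *\<^sub>v (B *\<^sub>v x) \<noteq> l \<cdot>\<^sub>v (B *\<^sub>v x)"
    and y: "y \<in> carrier_vec n" and Ay: "transpose_mat A *\<^sub>v y = l \<cdot>\<^sub>v y"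
  shows "transpose_mat A *\<^sub>v (transpose_mat B *\<^sub>v y) = l \<cdot>\<^sub>v (transpose_mat B *\<^sub>v y)"
proof -
  from comm obtain U V where U: "U \<in> carrier_mat n 1" and V: "V \<in> carrier_mat 1 n"
    and UV: "A * B - B * A = U * V" unfolding rank_one_commutator_def by auto
  define u where "u = col U 0"
  define z where "z = B *\<^sub>v x"
  have u: "u \<in> carrier_vec n" and z: "z \<in> carrier_vec n" using U B x by (auto simp: u_def z_def)
  have "A *\<^sub>v z - l \<cdot>\<^sub>v z = (A * B - B * A) *\<^sub>v x"
    using A B x by (simp add: commutator_mult_mat_vec Ax mult_mat_vec z_def)
  also have "\<dots> = (row V 0 \<bullet> x) \<cdot>\<^sub>v u" unfolding UV u_def by (rule outer_mult_mat_vec[OF U V x])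
  finally have range: "A *\<^sub>v z - l \<cdot>\<^sub>v z = (row V 0 \<bullet> x) \<cdot>\<^sub>v u" .
  \<comment> \<open>so \<open>u\<close> lies in the range of \<open>A - l\<close>, which is orthogonal to \<open>y\<close>\<close>
  have "row V 0 \<bullet> x \<noteq> 0"
  proof
    assume "row V 0 \<bullet> x = 0"
    then have "A *\<^sub>v z - l \<cdot>\<^sub>v z = 0\<^sub>v n" using range u by auto
    with escapes A z show False by (simp add: vec_minus_eq_zero_iff z_def)
  qed
  moreover have "y \<bullet> (A *\<^sub>v z - l \<cdot>\<^sub>v z) = 0"
    using A y z transpose_vec_mult_scalar[OF A z y]
    by (simp add: scalar_prod_minus_distrib[of _ n] Ay)
  ultimately have uy: "u \<bullet> y = 0"
    unfolding range using u y by (simp add: comm_scalar_prod[OF u y])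
  have "transpose_mat A *\<^sub>v (transpose_mat B *\<^sub>v y) - transpose_mat B *\<^sub>v (transpose_mat A *\<^sub>v y)
      = - (transpose_mat V * transpose_mat U *\<^sub>v y)"
    using A B U V y
    by (simp add: commutator_mult_mat_vec[symmetric, of _ n] transpose_commutator UV transpose_mult)
  also have "transpose_mat V * transpose_mat U *\<^sub>v y = (u \<bullet> y) \<cdot>\<^sub>v row V 0"
    using outer_mult_mat_vec[of "transpose_mat V" n "transpose_mat U" n y] U V y
    by (simp add: u_def)
  also have "- ((u \<bullet> y) \<cdot>\<^sub>v row V 0) = 0\<^sub>v n" using V uy by (intro eq_vecI) auto
  finally show ?thesis
    using A B y V by (simp add: vec_minus_eq_zero_iff uy Ay mult_mat_vec)
qed

lemma rank_one_commutator_common_eigenvector: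
  fixes A B :: "complex mat"
  assumes A: "A \<in> carrier_mat n n" and B: "B \<in> carrier_mat n n" and "n > 0"
    and comm: "rank_one_commutator n A B"
  shows "(\<exists>v a b. eigenvector A v a \<and> eigenvector B v b)
    \<or> (\<exists>v a b. eigenvector (transpose_mat A) v a \<and> eigenvector (transpose_mat B) v b)"
proof -
  obtain l where "eigenvalue A l"
    using spectrum_non_empty[OF A \<open>n > 0\<close>] unfolding spectrum_def by auto
  show ?thesis
  proof (cases "\<forall>x \<in> carrier_vec n. A *\<^sub>v x = l \<cdot>\<^sub>v x \<longrightarrow> A *\<^sub>v (B *\<^sub>v x) = l \<cdot>\<^sub>v (B *\<^sub>v x)")
    case True
    then show ?thesis using invariant_eigenspace_common_eigenvector[OF A B \<open>eigenvalue A l\<close>] by blast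
  next
    case False
    then obtain x where x: "x \<in> carrier_vec n" "A *\<^sub>v x = l \<cdot>\<^sub>v x"
      and escapes: "A *\<^sub>v (B *\<^sub>v x) \<noteq> l \<cdot>\<^sub>v (B *\<^sub>v x)" by blast
    have AT: "transpose_mat A \<in> carrier_mat n n" and BT: "transpose_mat B \<in> carrier_mat n n"
      using A B by auto
    have "eigenvalue (transpose_mat A) l"
      using \<open>eigenvalue A l\<close> A AT by (simp add: eigenvalue_root_char_poly)
    then show ?thesis
      using invariant_eigenspace_common_eigenvector[OF AT BT]
        rank_one_commutator_transpose_eigenspace_invariant[OF A B comm x escapes] by blast
  qed
qed

section \<open>Simultaneous triangularization\<close>

definition simultaneously_triangularizable :: "nat \<Rightarrow> 'a::semiring_1 mat \<Rightarrow> 'a mat \<Rightarrow> bool" where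
  "simultaneously_triangularizable n A B \<longleftrightarrow>
     (\<exists>P Q. P \<in> carrier_mat n n \<and> Q \<in> carrier_mat n n \<and> P * Q = 1\<^sub>m n \<and> Q * P = 1\<^sub>m n \<and>
        upper_triangular (Q * A * P) \<and> upper_triangular (Q * B * P))"

lemma simultaneously_triangularizable_similar:
  fixes A B W W' :: "'a::comm_ring_1 mat"
  assumes A: "A \<in> carrier_mat n n" and B: "B \<in> carrier_mat n n"
    and W: "W \<in> carrier_mat n n" and W': "W' \<in> carrier_mat n n"
    and WW': "W * W' = 1\<^sub>m n" and W'W: "W' * W = 1\<^sub>m n"
    and tri: "simultaneously_triangularizable n (W' * A * W) (W' * B * W)"
  shows "simultaneously_triangularizable n A B"
proof -
  from tri obtain P Q where P: "P \<in> carrier_mat n n" and Q: "Q \<in> carrier_mat n n"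
    and PQ: "P * Q = 1\<^sub>m n" and QP: "Q * P = 1\<^sub>m n"
    and upper: "upper_triangular (Q * (W' * A * W) * P)" "upper_triangular (Q * (W' * B * W) * P)"
    unfolding simultaneously_triangularizable_def by blast
  have conj: "Q * (W' * X * W) * P = Q * W' * X * (W * P)" if "X \<in> carrier_mat n n" for X
    using that P Q W W' by (simp add: assoc_mult_square_mat[of _ n] mult_square_carrier_mat)
  have "W * P * (Q * W') = W * (P * Q) * W'" "Q * W' * (W * P) = Q * (W' * W) * P"
    using P Q W W' by (simp_all add: assoc_mult_square_mat[of _ n] mult_square_carrier_mat)
  then have "W * P * (Q * W') = 1\<^sub>m n" "Q * W' * (W * P) = 1\<^sub>m n"
    using P Q W W' PQ QP WW' W'W by simp_all
  with upper show ?thesis unfolding simultaneously_triangularizable_def conj[OF A] conj[OF B]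
    using P Q W W' by (intro exI[of _ "W * P"] exI[of _ "Q * W'"]) auto
qed

definition exchange_mat :: "nat \<Rightarrow> 'a::semiring_1 mat" where
  "exchange_mat n = mat n n (\<lambda>(i, j). if i + j = n - 1 then 1 else 0)"

lemma exchange_mat_carrier [simp]: "exchange_mat n \<in> carrier_mat n n"
  by (simp add: exchange_mat_def)

lemma index_exchange_mat_mult:
  fixes M :: "'a::semiring_1 mat"
  assumes "M \<in> carrier_mat n m" and "i < n" and "j < m"
  shows "(exchange_mat n * M) $$ (i, j) = M $$ (n - 1 - i, j)"
proof -
  have "(exchange_mat n * M) $$ (i, j) = (\<Sum>k\<in>{0..<n}. (if i + k = n - 1 then 1 else 0) * M $$ (k, j))"
    using assms by (simp add: exchange_mat_def scalar_prod_def)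
  also have "\<dots> = (\<Sum>k\<in>{n - 1 - i}. M $$ (k, j))"
    using assms by (intro sum.mono_neutral_cong_right) auto
  finally show ?thesis by simp
qed

lemma index_mult_exchange_mat:
  fixes M :: "'a::semiring_1 mat"
  assumes "M \<in> carrier_mat m n" and "i < m" and "j < n"
  shows "(M * exchange_mat n) $$ (i, j) = M $$ (i, n - 1 - j)"
proof -
  have "(M * exchange_mat n) $$ (i, j) = (\<Sum>k\<in>{0..<n}. M $$ (i, k) * (if k + j = n - 1 then 1 else 0))"
    using assms by (simp add: exchange_mat_def scalar_prod_def)
  also have "\<dots> = (\<Sum>k\<in>{n - 1 - j}. M $$ (i, k))"
    using assms by (intro sum.mono_neutral_cong_right) auto
  finally show ?thesis by simp
qed

lemma exchange_mat_mult_exchange_mat: "(exchange_mat n :: 'a::semiring_1 mat) * exchange_mat n = 1\<^sub>m n"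
proof (rule eq_matI)
  fix i j assume "i < dim_row (1\<^sub>m n :: 'a mat)" "j < dim_col (1\<^sub>m n :: 'a mat)"
  then show "(exchange_mat n * exchange_mat n) $$ (i, j) = (1\<^sub>m n :: 'a mat) $$ (i, j)"
    by (subst index_exchange_mat_mult[OF exchange_mat_carrier]) (auto simp: exchange_mat_def)
qed (simp_all add: exchange_mat_def)

lemma upper_triangular_exchange_conj_transpose:
  fixes L :: "'a::semiring_1 mat"
  assumes L: "L \<in> carrier_mat n n" and upper: "upper_triangular (transpose_mat L)"
  shows "upper_triangular (exchange_mat n * L * exchange_mat n)"
proof (rule upper_triangularI)
  fix i j assume "j < i" and "i < dim_row (exchange_mat n * L * exchange_mat n)"
  then have i: "i < n" and j: "j < n" using L by (auto simp: exchange_mat_def)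
  have "(exchange_mat n * L * exchange_mat n) $$ (i, j) = (exchange_mat n * L) $$ (i, n - 1 - j)"
    by (rule index_mult_exchange_mat) (use L i j mult_square_carrier_mat[OF exchange_mat_carrier L] in auto)
  also have "\<dots> = L $$ (n - 1 - i, n - 1 - j)"
    by (rule index_exchange_mat_mult[OF L i]) (use j in auto)
  also have "\<dots> = transpose_mat L $$ (n - 1 - j, n - 1 - i)" using L i j by simp
  also have "\<dots> = 0" using upper L i j \<open>j < i\<close> by (simp add: upper_triangularD)
  finally show "(exchange_mat n * L * exchange_mat n) $$ (i, j) = 0" .
qed

lemma transpose_conj_transpose:
  fixes X P Q :: "'a::comm_ring_1 mat"
  assumes X: "X \<in> carrier_mat n n" and P: "P \<in> carrier_mat n n" and Q: "Q \<in> carrier_mat n n"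
  shows "transpose_mat (Q * transpose_mat X * P) = transpose_mat P * X * transpose_mat Q"
proof -
  have "transpose_mat (Q * transpose_mat X * P) = transpose_mat P * transpose_mat (Q * transpose_mat X)"
    by (rule transpose_mult) (use X P Q in auto)
  also have "transpose_mat (Q * transpose_mat X) = X * transpose_mat Q"
    using transpose_mult[OF Q, of "transpose_mat X" n] X by simp
  finally show ?thesis using X P Q by (simp add: assoc_mult_square_mat[of _ n])
qed

lemma simultaneously_triangularizable_transpose:
  fixes A B :: "'a::comm_ring_1 mat"
  assumes A: "A \<in> carrier_mat n n" and B: "B \<in> carrier_mat n n"
    and tri: "simultaneously_triangularizable n (transpose_mat A) (transpose_mat B)"
  shows "simultaneously_triangularizable n A B"
proof -
  from tri obtain P Q where P: "P \<in> carrier_mat n n" and Q: "Q \<in> carrier_mat n n"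
    and PQ: "P * Q = 1\<^sub>m n" and QP: "Q * P = 1\<^sub>m n"
    and upper: "upper_triangular (Q * transpose_mat A * P)" "upper_triangular (Q * transpose_mat B * P)"
    unfolding simultaneously_triangularizable_def by blast
  define J where "J = (exchange_mat n :: 'a mat)"
  have J: "J \<in> carrier_mat n n" and JJ: "J * J = 1\<^sub>m n"
    unfolding J_def by (simp_all add: exchange_mat_mult_exchange_mat)
  have "transpose_mat Q * transpose_mat P = 1\<^sub>m n" "transpose_mat P * transpose_mat Q = 1\<^sub>m n"
    unfolding transpose_mult[OF P Q, symmetric] transpose_mult[OF Q P, symmetric] PQ QP by simp_all
  moreover have "transpose_mat Q * J * (J * transpose_mat P) = transpose_mat Q * (J * J) * transpose_mat P"
    "J * transpose_mat P * (transpose_mat Q * J) = J * (transpose_mat P * transpose_mat Q) * J"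
    using P Q J by (simp_all add: assoc_mult_square_mat[of _ n] mult_square_carrier_mat)
  ultimately have "transpose_mat Q * J * (J * transpose_mat P) = 1\<^sub>m n"
    "J * transpose_mat P * (transpose_mat Q * J) = 1\<^sub>m n"
    using P Q J JJ by simp_all
  moreover have "upper_triangular (J * transpose_mat P * X * (transpose_mat Q * J))"
    if X: "X \<in> carrier_mat n n" and "upper_triangular (Q * transpose_mat X * P)" for X
  proof -
    have "upper_triangular (transpose_mat (transpose_mat P * X * transpose_mat Q))"
      using that(2) by (simp only: transpose_conj_transpose[OF X P Q, symmetric] transpose_transpose)
    then have "upper_triangular (J * (transpose_mat P * X * transpose_mat Q) * J)"
      unfolding J_def by (rule upper_triangular_exchange_conj_transpose[rotated]) (use X P Q in auto)
    moreover have "J * transpose_mat P * X * (transpose_mat Q * J)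
        = J * (transpose_mat P * X * transpose_mat Q) * J"
      using X P Q J by (simp add: assoc_mult_square_mat[of _ n] mult_square_carrier_mat)
    ultimately show ?thesis by simp
  qed
  ultimately show ?thesis unfolding simultaneously_triangularizable_def
    using upper A B P Q J by (intro exI[of _ "transpose_mat Q * J"] exI[of _ "J * transpose_mat P"]) auto
qed

definition lower_right_block :: "nat \<Rightarrow> 'a mat \<Rightarrow> 'a mat" where
  "lower_right_block m X = mat m m (\<lambda>(i, j). X $$ (Suc i, Suc j))"

lemma lower_right_block_carrier [simp]:
  "lower_right_block m X \<in> carrier_mat m m"
  "dim_row (lower_right_block m X) = m" "dim_col (lower_right_block m X) = m"
  by (simp_all add: lower_right_block_def)

lemma lower_right_block_mult:
  fixes X Y :: "'a::comm_ring_1 mat"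
  assumes X: "X \<in> carrier_mat (Suc m) (Suc m)" and Y: "Y \<in> carrier_mat (Suc m) (Suc m)"
    and first_col: "\<forall>i<m. X $$ (Suc i, 0) = 0"
  shows "lower_right_block m (X * Y) = lower_right_block m X * lower_right_block m Y"
proof (rule eq_matI)
  fix i j assume "i < dim_row (lower_right_block m X * lower_right_block m Y)"
    and "j < dim_col (lower_right_block m X * lower_right_block m Y)"
  then have i: "i < m" and j: "j < m" by (simp_all add: lower_right_block_def)
  have "(X * Y) $$ (Suc i, Suc j) = (\<Sum>k<Suc m. X $$ (Suc i, k) * Y $$ (k, Suc j))"
    using X Y i j by (simp add: scalar_prod_def lessThan_atLeast0)
  also have "\<dots> = (\<Sum>k<m. X $$ (Suc i, Suc k) * Y $$ (Suc k, Suc j))"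
    using first_col i by (subst sum.lessThan_Suc_shift) simp
  finally show "lower_right_block m (X * Y) $$ (i, j) = (lower_right_block m X * lower_right_block m Y) $$ (i, j)"
    using i j by (simp add: lower_right_block_def scalar_prod_def lessThan_atLeast0)
qed (simp_all add: lower_right_block_def)

lemma rank_one_commutator_lower_right_block:
  fixes A B :: "'a::comm_ring_1 mat"
  assumes A: "A \<in> carrier_mat (Suc m) (Suc m)" and B: "B \<in> carrier_mat (Suc m) (Suc m)"
    and first_cols: "\<forall>i<m. A $$ (Suc i, 0) = 0" "\<forall>i<m. B $$ (Suc i, 0) = 0"
    and comm: "rank_one_commutator (Suc m) A B"
  shows "rank_one_commutator m (lower_right_block m A) (lower_right_block m B)"
proof -
  from comm obtain U V where U: "U \<in> carrier_mat (Suc m) 1" and V: "V \<in> carrier_mat 1 (Suc m)"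
    and UV: "A * B - B * A = U * V" unfolding rank_one_commutator_def by auto
  define U' where "U' = mat m 1 (\<lambda>(i, j). U $$ (Suc i, j))"
  define V' where "V' = mat 1 m (\<lambda>(i, j). V $$ (i, Suc j))"
  have "lower_right_block m A * lower_right_block m B - lower_right_block m B * lower_right_block m A
      = lower_right_block m (A * B) - lower_right_block m (B * A)"
    by (simp add: lower_right_block_mult[OF A B first_cols(1)] lower_right_block_mult[OF B A first_cols(2)])
  also have "\<dots> = lower_right_block m (A * B - B * A)"
    using A B by (intro eq_matI) (auto simp: lower_right_block_def)
  also have "\<dots> = U' * V'"
    unfolding UV using U V
    by (intro eq_matI) (auto simp: lower_right_block_def U'_def V'_def scalar_prod_def)
  finally show ?thesis unfolding rank_one_commutator_def
    by (intro exI[of _ U'] exI[of _ V']) (simp add: U'_def V'_def)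
qed

lemma first_column_block_decomposition:
  fixes X :: "'a::zero mat"
  assumes X: "X \<in> carrier_mat (Suc m) (Suc m)" and first_col: "\<forall>i<m. X $$ (Suc i, 0) = 0"
  shows "X = four_block_mat (mat 1 1 (\<lambda>_. X $$ (0, 0))) (mat 1 m (\<lambda>(_, j). X $$ (0, Suc j)))
    (0\<^sub>m m 1) (lower_right_block m X)"
  using X first_col
  by (intro eq_matI) (auto simp: lower_right_block_def less_Suc_eq_0_disj Suc_diff_Suc)

lemma upper_triangular_first_column_conj:
  fixes X :: "'a::comm_ring_1 mat"
  assumes X: "X \<in> carrier_mat (Suc m) (Suc m)" and first_col: "\<forall>i<m. X $$ (Suc i, 0) = 0"
    and P: "P \<in> carrier_mat m m" and Q: "Q \<in> carrier_mat m m"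
    and upper: "upper_triangular (Q * lower_right_block m X * P)"
  shows "upper_triangular (four_block_mat (1\<^sub>m 1) (0\<^sub>m 1 m) (0\<^sub>m m 1) Q * X
    * four_block_mat (1\<^sub>m 1) (0\<^sub>m 1 m) (0\<^sub>m m 1) P)"
proof -
  define X1 where "X1 = mat 1 1 (\<lambda>_. X $$ (0, 0))"
  define X2 where "X2 = mat 1 m (\<lambda>(_, j). X $$ (0, Suc j))"
  have blocks: "X1 \<in> carrier_mat 1 1" "X2 \<in> carrier_mat 1 m"
    by (simp_all add: X1_def X2_def)
  have "four_block_mat (1\<^sub>m 1) (0\<^sub>m 1 m) (0\<^sub>m m 1) Q * four_block_mat X1 X2 (0\<^sub>m m 1) (lower_right_block m X)
      = four_block_mat X1 X2 (0\<^sub>m m 1) (Q * lower_right_block m X)"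
    using Q blocks by (subst mult_four_block_mat) auto
  moreover have "four_block_mat X1 X2 (0\<^sub>m m 1) (Q * lower_right_block m X)
      * four_block_mat (1\<^sub>m 1) (0\<^sub>m 1 m) (0\<^sub>m m 1) P
      = four_block_mat X1 (X2 * P) (0\<^sub>m m 1) (Q * lower_right_block m X * P)"
    using P Q blocks by (subst mult_four_block_mat) auto
  ultimately have "four_block_mat (1\<^sub>m 1) (0\<^sub>m 1 m) (0\<^sub>m m 1) Q * X * four_block_mat (1\<^sub>m 1) (0\<^sub>m 1 m) (0\<^sub>m m 1) P
      = four_block_mat X1 (X2 * P) (0\<^sub>m m 1) (Q * lower_right_block m X * P)"
    using first_column_block_decomposition[OF X first_col] by (simp add: X1_def X2_def)
  moreover have "upper_triangular X1" by (auto simp: X1_def)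
  moreover have "Q * lower_right_block m X * P \<in> carrier_mat m m" using P Q by auto
  ultimately show ?thesis using upper_triangular_four_block[OF blocks(1) _ _ upper] by simp
qed

lemma simultaneously_triangularizable_extend:
  fixes X Y :: "'a::comm_ring_1 mat"
  assumes X: "X \<in> carrier_mat (Suc m) (Suc m)" and Y: "Y \<in> carrier_mat (Suc m) (Suc m)"
    and first_cols: "\<forall>i<m. X $$ (Suc i, 0) = 0" "\<forall>i<m. Y $$ (Suc i, 0) = 0"
    and tri: "simultaneously_triangularizable m (lower_right_block m X) (lower_right_block m Y)"
  shows "simultaneously_triangularizable (Suc m) X Y"
proof -
  from tri obtain P Q where P: "P \<in> carrier_mat m m" and Q: "Q \<in> carrier_mat m m"
    and PQ: "P * Q = 1\<^sub>m m" and QP: "Q * P = 1\<^sub>m m"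
    and upper: "upper_triangular (Q * lower_right_block m X * P)"
      "upper_triangular (Q * lower_right_block m Y * P)"
    unfolding simultaneously_triangularizable_def by blast
  define P' where "P' = four_block_mat (1\<^sub>m 1) (0\<^sub>m 1 m) (0\<^sub>m m 1) P"
  define Q' where "Q' = four_block_mat (1\<^sub>m 1) (0\<^sub>m 1 m) (0\<^sub>m m 1) Q"
  have "P' * Q' = 1\<^sub>m (Suc m)" "Q' * P' = 1\<^sub>m (Suc m)"
    unfolding P'_def Q'_def using P Q PQ QP
    by (subst mult_four_block_mat; force simp flip: four_block_one_mat)+
  moreover have "P' \<in> carrier_mat (Suc m) (Suc m)" "Q' \<in> carrier_mat (Suc m) (Suc m)"
    using four_block_carrier_mat[OF one_carrier_mat[of 1] P] four_block_carrier_mat[OF one_carrier_mat[of 1] Q]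
    by (simp_all add: P'_def Q'_def)
  ultimately show ?thesis unfolding simultaneously_triangularizable_def P'_def Q'_def
    using upper_triangular_first_column_conj[OF X first_cols(1) P Q upper(1)]
      upper_triangular_first_column_conj[OF Y first_cols(2) P Q upper(2)] by blast
qed

lemma eigenvector_deflation:
  fixes v :: "'a::conjugatable_ordered_field vec"
  assumes v: "v \<in> carrier_vec n" and v0: "v \<noteq> 0\<^sub>v n"
  obtains W W' where "W \<in> carrier_mat n n" "W' \<in> carrier_mat n n"
    "W * W' = 1\<^sub>m n" "W' * W = 1\<^sub>m n"
    "\<And>X e i. X \<in> carrier_mat n n \<Longrightarrow> X *\<^sub>v v = e \<cdot>\<^sub>v v \<Longrightarrow> 0 < i \<Longrightarrow> i < n \<Longrightarrow>
      (W' * X * W) $$ (i, 0) = 0"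
proof -
  interpret cof_vec_space n "TYPE('a)" .
  have n: "n \<noteq> 0" using v v0 by auto
  \<comment> \<open>as in the first step of the Schur decomposition: an orthogonal basis starting with \<open>v\<close>\<close>
  define ws where "ws = gram_schmidt n (basis_completion v)"
  define W where "W = mat_of_cols n ws"
  define W' where "W' = corthogonal_inv W"
  from basis_completion[OF v v0] obtain vs where
    "span (set (basis_completion v)) = carrier_vec n" and "distinct (basis_completion v)"
    and "\<not> lin_dep (set (basis_completion v))" and "set (basis_completion v) \<subseteq> carrier_vec n"
    and "basis_completion v = v # vs" and "length (basis_completion v) = n"
    by (metis hd_Cons_tl length_0_conv n)
  with gram_schmidt_result[of "basis_completion v" ws] gram_schmidt_hd[OF v, of vs]
  have ws: "set ws \<subseteq> carrier_vec n" "corthogonal ws" "length ws = n" and hd_ws: "hd ws = v"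
    by (auto simp: ws_def)
  have W: "W \<in> carrier_mat n n" using mat_of_cols_carrier(1)[of n ws] ws by (simp add: W_def)
  have W': "W' \<in> carrier_mat n n" using W by (simp add: W'_def corthogonal_inv_def mat_of_rows_def)
  have "inverts_mat W' W" unfolding W'_def W_def
    by (rule corthogonal_inv_result[OF orthogonal_mat_of_cols]) (use ws in auto)
  then have W'W: "W' * W = 1\<^sub>m n" and WW': "W * W' = 1\<^sub>m n"
    using mat_mult_left_right_inverse[OF W' W] W W' unfolding inverts_mat_def by auto
  have "(W' * X * W) $$ (i, 0) = 0"
    if "X \<in> carrier_mat n n" "X *\<^sub>v v = e \<cdot>\<^sub>v v" "0 < i" "i < n" for X e i
    using corthogonal_col_ev_0[OF that(1) v v0 that(2) n hd_ws ws, folded W_def W'_def,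
        THEN arg_cong[where f = "\<lambda>c. c $ i"]] that W W' n by simp
  with that W W' WW' W'W show ?thesis by blast
qed

lemma common_eigenvector_deflation:
  fixes A B :: "'a::conjugatable_ordered_field mat"
  assumes A: "A \<in> carrier_mat (Suc m) (Suc m)" and B: "B \<in> carrier_mat (Suc m) (Suc m)"
    and comm: "rank_one_commutator (Suc m) A B"
    and eigen: "eigenvector A v a" "eigenvector B v b"
    and induct: "\<And>A B :: 'a mat. A \<in> carrier_mat m m \<Longrightarrow> B \<in> carrier_mat m m \<Longrightarrow>
      rank_one_commutator m A B \<Longrightarrow> simultaneously_triangularizable m A B"
  shows "simultaneously_triangularizable (Suc m) A B"
proof -
  from eigen have v: "v \<in> carrier_vec (Suc m)" "v \<noteq> 0\<^sub>v (Suc m)"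
    and Av: "A *\<^sub>v v = a \<cdot>\<^sub>v v" and Bv: "B *\<^sub>v v = b \<cdot>\<^sub>v v"
    using A unfolding eigenvector_def by auto
  obtain W W' where W: "W \<in> carrier_mat (Suc m) (Suc m)" and W': "W' \<in> carrier_mat (Suc m) (Suc m)"
    and WW': "W * W' = 1\<^sub>m (Suc m)" and W'W: "W' * W = 1\<^sub>m (Suc m)"
    and deflated: "\<And>X e i. X \<in> carrier_mat (Suc m) (Suc m) \<Longrightarrow> X *\<^sub>v v = e \<cdot>\<^sub>v v \<Longrightarrow>
      0 < i \<Longrightarrow> i < Suc m \<Longrightarrow> (W' * X * W) $$ (i, 0) = 0"
    using eigenvector_deflation[OF v] by metis
  define A' where "A' = W' * A * W"
  define B' where "B' = W' * B * W"
  have A': "A' \<in> carrier_mat (Suc m) (Suc m)" and B': "B' \<in> carrier_mat (Suc m) (Suc m)"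
    using A B W W' by (auto simp: A'_def B'_def)
  have first_cols: "\<forall>i<m. A' $$ (Suc i, 0) = 0" "\<forall>i<m. B' $$ (Suc i, 0) = 0"
    using deflated[OF A Av] deflated[OF B Bv] by (simp_all add: A'_def B'_def)
  have "rank_one_commutator (Suc m) A' B'"
    unfolding A'_def B'_def by (rule rank_one_commutator_similar[OF A B W W' WW' comm])
  then have "rank_one_commutator m (lower_right_block m A') (lower_right_block m B')"
    by (rule rank_one_commutator_lower_right_block[OF A' B' first_cols])
  then have "simultaneously_triangularizable m (lower_right_block m A') (lower_right_block m B')"
    using induct[of "lower_right_block m A'" "lower_right_block m B'"] by simp
  then have "simultaneously_triangularizable (Suc m) A' B'"
    by (rule simultaneously_triangularizable_extend[OF A' B' first_cols])
  then show ?thesis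
    unfolding A'_def B'_def by (rule simultaneously_triangularizable_similar[OF A B W W' WW' W'W])
qed

lemma rank_one_commutator_imp_simultaneously_triangularizable:
  fixes A B :: "complex mat"
  assumes "A \<in> carrier_mat n n" and "B \<in> carrier_mat n n" and "rank_one_commutator n A B"
  shows "simultaneously_triangularizable n A B"
  using assms
proof (induction n arbitrary: A B)
  case 0
  then show ?case unfolding simultaneously_triangularizable_def
    by (intro exI[of _ "1\<^sub>m 0"]) (auto simp: upper_triangular_def)
next
  case (Suc m)
  have AT: "transpose_mat A \<in> carrier_mat (Suc m) (Suc m)" and BT: "transpose_mat B \<in> carrier_mat (Suc m) (Suc m)"
    using Suc.prems by auto
  from rank_one_commutator_common_eigenvector[OF Suc.prems(1,2) zero_less_Suc Suc.prems(3)]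
  show ?case
  proof (elim disjE exE conjE)
    fix v a b assume "eigenvector A v a" "eigenvector B v b"
    then show ?thesis using common_eigenvector_deflation[OF Suc.prems] Suc.IH by blast
  next
    fix v a b assume "eigenvector (transpose_mat A) v a" "eigenvector (transpose_mat B) v b"
    then have "simultaneously_triangularizable (Suc m) (transpose_mat A) (transpose_mat B)"
      using common_eigenvector_deflation[OF AT BT rank_one_commutator_transpose[OF Suc.prems]]
        Suc.IH by blast
    then show ?thesis by (rule simultaneously_triangularizable_transpose[OF Suc.prems(1,2)])
  qed
qed

theorem corollary3p3:
  fixes A B Ainv Binv :: "complex mat" and n :: nat
  assumes "A \<in> carrier_mat n n" and "B \<in> carrier_mat n n"
    and "Ainv \<in> carrier_mat n n" and "Binv \<in> carrier_mat n n"
    and "A * Ainv = 1\<^sub>m n" and "Ainv * A = 1\<^sub>m n"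
    and "B * Binv = 1\<^sub>m n" and "Binv * B = 1\<^sub>m n"
    and "vec_space.rank n (A * B * Ainv * Binv - 1\<^sub>m n) \<le> 1"
  shows "\<exists>P Q. P \<in> carrier_mat n n \<and> Q \<in> carrier_mat n n \<and>
           P * Q = 1\<^sub>m n \<and> Q * P = 1\<^sub>m n \<and>
           upper_triangular (Q * A * P) \<and> upper_triangular (Q * B * P)"
  using rank_one_commutator_imp_simultaneously_triangularizable[OF assms(1,2)
      rank_one_commutator_if_rank_group_commutator_le_1[OF assms(1-4,6,8,9)]]
  unfolding simultaneously_triangularizable_def .

end
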